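(* Let $(t_1,s_1),(t_2,s_2)\in\mathbb{C}^\times\times\mathbb{C}^\times$ with $t_1\ne t_2$ and $s_1\neq s_2$, let $X_1=A_2(t_1,s_1)$, $X_2=A_2(t_2,s_2)$, and let $\mathfrak{M}_2^2(2)$ be the subgroup of invertible $2\times2$ complex matrices generated by $X_1,X_2$. Then for every $A\in\mathfrak{M}_2^2(2)$, either $A^{-1}=A$, or $A^{-1}=r_AI_2-A$ for some $r_A\in\mathbb{C}$.
   Context: $\mathbb{C}^\times=\mathbb{C}\setminus\{0\}$; $A_2(t,s)=\begin{pmatrix} t & s\\ \frac{1-t^2}{s} & -t\end{pmatrix}$; $I_2$ is the $2\times2$ identity matrix. *)

theory Defs
  imports "HOL-Analysis.Analysis"
begin

definition A2 :: "complex \<Rightarrow> complex \<Rightarrow> complex^2^2" where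
  "A2 t s = (\<chi> i j. if i = 1 then (if j = 1 then t else s)
                     else (if j = 1 then (1 - t^2) / s else - t))"

inductive_set gen_subgroup :: "('a::field^'n^'n) set \<Rightarrow> ('a^'n^'n) set"
  for G :: "('a::field^'n^'n) set" where
  gen_one: "mat 1 \<in> gen_subgroup G"
| gen_gen: "g \<in> G \<Longrightarrow> g \<in> gen_subgroup G"
| gen_mult: "a \<in> gen_subgroup G \<Longrightarrow> b \<in> gen_subgroup G \<Longrightarrow> a ** b \<in> gen_subgroup G"
| gen_inv: "a \<in> gen_subgroup G \<Longrightarrow> matrix_inv a \<in> gen_subgroup G"

end

theory Submission imports Defs begin

text \<open>\<open>X\<^sub>1\<close> and \<open>X\<^sub>2\<close> are involutions of determinant \<open>-1\<close>, so they generate a dihedral group: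
  with \<open>R = X\<^sub>1 X\<^sub>2\<close> one has \<open>X\<^sub>1 R X\<^sub>1 = R\<^sup>-\<^sup>1\<close>, hence every element is a rotation \<open>R\<^sup>k\<close> or a
  reflection \<open>R\<^sup>k X\<^sub>1\<close> (\<open>k \<in> \<int>\<close>). Reflections are involutions. Rotations have determinant 1, and
  for a \<open>2\<times>2\<close> matrix of determinant 1 Cayley--Hamilton gives \<open>A\<^sup>-\<^sup>1 = (tr A) I - A\<close>.\<close>

lemma matrix_inv_unique:
  fixes A B :: "'a::field^'n^'n"
  assumes "A ** B = mat 1"
  shows "matrix_inv A = B"
proof -
  have "B ** A = mat 1"
    using assms matrix_left_right_inverse by blast
  have inv: "A ** matrix_inv A = mat 1 \<and> matrix_inv A ** A = mat 1"
    unfolding matrix_inv_def by (rule someI[of _ B]) (use assms \<open>B ** A = mat 1\<close> in auto)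
  have "matrix_inv A = (B ** A) ** matrix_inv A"
    using \<open>B ** A = mat 1\<close> by simp
  also have "\<dots> = B"
    using inv by (simp flip: matrix_mul_assoc)
  finally show ?thesis .
qed

lemma matrix_inv_right:
  fixes A :: "'a::field^'n^'n"
  assumes "invertible A"
  shows "A ** matrix_inv A = mat 1"
  using assms matrix_inv_unique unfolding invertible_def by metis

lemma matrix_inv_left:
  fixes A :: "'a::field^'n^'n"
  assumes "invertible A"
  shows "matrix_inv A ** A = mat 1"
  using matrix_inv_right[OF assms] matrix_left_right_inverse by blast

primrec matpow :: "'a::semiring_1^'n^'n \<Rightarrow> nat \<Rightarrow> 'a^'n^'n" where
  "matpow A 0 = mat 1"
| "matpow A (Suc n) = A ** matpow A n"

lemma matpow_Suc_right: "matpow A (Suc n) = matpow A n ** A"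
  by (induction n) (simp_all add: matrix_mul_assoc)

lemma matpow_intertwine:
  assumes "X ** A = B ** X"
  shows "X ** matpow A n = matpow B n ** X"
proof (induction n)
  case (Suc n)
  have "X ** matpow A (Suc n) = B ** (X ** matpow A n)"
    by (simp add: matrix_mul_assoc assms)
  then show ?case
    by (simp add: Suc matrix_mul_assoc)
qed simp

definition mat_zpow :: "'a::field^'n^'n \<Rightarrow> int \<Rightarrow> 'a^'n^'n" where
  "mat_zpow A k = (if 0 \<le> k then matpow A (nat k) else matpow (matrix_inv A) (nat (-k)))"

lemma mat_zpow_0 [simp]: "mat_zpow A 0 = mat 1"
  by (simp add: mat_zpow_def)

lemma mat_zpow_neg_one [simp]: "mat_zpow A (-1) = matrix_inv A"
  by (simp add: mat_zpow_def)

lemma mat_zpow_succ: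
  assumes "invertible A"
  shows "mat_zpow A k ** A = mat_zpow A (k + 1)"
proof (cases "0 \<le> k")
  case True
  then show ?thesis
    by (simp add: mat_zpow_def nat_add_distrib flip: matpow_Suc_right)
next
  case False
  then obtain j where j: "nat (-k) = Suc j"
    using not0_implies_Suc by fastforce
  have "matpow (matrix_inv A) (Suc j) ** A = matpow (matrix_inv A) j"
    by (simp only: matpow_Suc_right) (simp add: matrix_inv_left[OF assms] flip: matrix_mul_assoc)
  moreover have "nat (-(k + 1)) = j" "\<not> 0 \<le> k + 1 \<or> j = 0"
    using j False by linarith+
  ultimately show ?thesis
    using False j by (auto simp: mat_zpow_def)
qed

lemma mat_zpow_pred:
  assumes "invertible A"
  shows "mat_zpow A k ** matrix_inv A = mat_zpow A (k - 1)"
proof (cases "0 < k")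
  case True
  then obtain j where j: "nat k = Suc j"
    using not0_implies_Suc by fastforce
  have "matpow A (Suc j) ** matrix_inv A = matpow A j"
    by (simp only: matpow_Suc_right) (simp add: matrix_inv_right[OF assms] flip: matrix_mul_assoc)
  moreover have "nat (k - 1) = j"
    using j by linarith
  ultimately show ?thesis
    using True j by (simp add: mat_zpow_def)
next
  case False
  then have "nat (-(k - 1)) = Suc (nat (-k))"
    by linarith
  then show ?thesis
    using False by (simp add: mat_zpow_def flip: matpow_Suc_right)
qed

lemma mat_zpow_add:
  assumes "invertible A"
  shows "mat_zpow A m ** mat_zpow A n = mat_zpow A (m + n)"
proof (induction n rule: int_induct[where k = 0])
  case (step1 i)
  have "mat_zpow A m ** mat_zpow A (i + 1) = (mat_zpow A m ** mat_zpow A i) ** A"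
    by (simp add: matrix_mul_assoc mat_zpow_succ[OF assms, symmetric])
  then show ?case
    by (simp add: step1(2) mat_zpow_succ[OF assms] add.assoc)
next
  case (step2 i)
  have "mat_zpow A m ** mat_zpow A (i - 1) = (mat_zpow A m ** mat_zpow A i) ** matrix_inv A"
    by (simp add: matrix_mul_assoc mat_zpow_pred[OF assms, symmetric])
  then show ?case
    by (simp add: step2(2) mat_zpow_pred[OF assms] algebra_simps)
qed simp

lemma matrix_inv_mat_zpow:
  assumes "invertible A"
  shows "matrix_inv (mat_zpow A k) = mat_zpow A (-k)"
  by (rule matrix_inv_unique) (simp add: mat_zpow_add[OF assms])

lemma det_mat_zpow:
  fixes A :: "'a::field^'n^'n"
  assumes "det A = 1"
  shows "det (mat_zpow A k) = 1"
proof -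
  have "invertible A"
    using assms invertible_det_nz by force
  then have "det A * det (matrix_inv A) = 1"
    by (metis det_I det_mul matrix_inv_right)
  then have "det (matrix_inv A) = 1"
    using assms by simp
  have "det (matpow B n) = 1" if "det B = 1" for B :: "'a^'n^'n" and n
    using that by (induction n) (simp_all add: det_mul)
  then show ?thesis
    using assms \<open>det (matrix_inv A) = 1\<close> by (simp add: mat_zpow_def)
qed

lemma mat_zpow_conj:
  assumes "invertible R" "X ** R = matrix_inv R ** X"
  shows "X ** mat_zpow R k = mat_zpow R (-k) ** X"
proof -
  have "R ** X ** R = (R ** matrix_inv R) ** X"
    by (simp add: assms(2) flip: matrix_mul_assoc)
  then have "R ** X ** R = X"
    by (simp add: matrix_inv_right[OF assms(1)])
  then have "X ** matrix_inv R = R ** X"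
    by (metis assms(1) matrix_inv_right matrix_mul_assoc matrix_mul_rid)
  then show ?thesis
    using matpow_intertwine[OF assms(2)] matpow_intertwine[of X "matrix_inv R" R]
    by (simp add: mat_zpow_def)
qed

lemma mat_zpow_reflection_mult:
  assumes "invertible R" "X ** R = matrix_inv R ** X"
  shows "(mat_zpow R m ** X) ** mat_zpow R n = mat_zpow R (m - n) ** X"
proof -
  have "(mat_zpow R m ** X) ** mat_zpow R n = (mat_zpow R m ** mat_zpow R (-n)) ** X"
    by (simp add: mat_zpow_conj[OF assms] flip: matrix_mul_assoc)
  then show ?thesis
    by (simp add: mat_zpow_add[OF assms(1)])
qed

lemma mat_zpow_reflection_mult_reflection:
  assumes "invertible R" "X ** R = matrix_inv R ** X" "X ** X = mat 1"
  shows "(mat_zpow R m ** X) ** (mat_zpow R n ** X) = mat_zpow R (m - n)"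
  by (simp add: matrix_mul_assoc mat_zpow_reflection_mult[OF assms(1,2)])
    (simp add: assms(3) flip: matrix_mul_assoc)

lemma matrix_inv_involution_product:
  fixes X Y :: "'a::field^'n^'n"
  assumes "X ** X = mat 1" "Y ** Y = mat 1"
  shows "matrix_inv (X ** Y) = Y ** X"
  by (rule matrix_inv_unique) (simp add: assms matrix_mul_assoc flip: matrix_mul_assoc[of X Y])

lemma invertible_involution_product:
  fixes X Y :: "'a::field^'n^'n"
  assumes "X ** X = mat 1" "Y ** Y = mat 1"
  shows "invertible (X ** Y)"
  by (metis assms invertible_right_inverse matrix_inv_involution_product matrix_inv_unique
      matrix_mul_assoc matrix_mul_rid)

lemma involution_inverts_product:
  fixes X Y :: "'a::field^'n^'n"
  assumes "X ** X = mat 1" "Y ** Y = mat 1"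
  shows "X ** (X ** Y) = matrix_inv (X ** Y) ** X"
  by (metis assms matrix_inv_involution_product matrix_mul_assoc matrix_mul_lid matrix_mul_rid)

lemma gen_subgroup_two_involutions:
  fixes X Y :: "'a::field^'n^'n"
  assumes "X ** X = mat 1" "Y ** Y = mat 1" "A \<in> gen_subgroup {X, Y}"
  shows "\<exists>k. A = mat_zpow (X ** Y) k \<or> A = mat_zpow (X ** Y) k ** X"
proof -
  note R = invertible_involution_product[OF assms(1,2)]
    and conj = involution_inverts_product[OF assms(1,2)]
  from assms(3) show ?thesis
  proof (induction A rule: gen_subgroup.induct)
    case gen_one
    show ?case
      by (metis mat_zpow_0)
  next
    case (gen_gen g)
    have "Y = mat_zpow (X ** Y) (-1) ** X"
      by (metis assms(1) mat_zpow_neg_one matrix_inv_involution_product[OF assms(1,2)]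
          matrix_mul_assoc matrix_mul_rid)
    moreover have "X = mat_zpow (X ** Y) 0 ** X"
      by simp
    ultimately show ?case
      using gen_gen by blast
  next
    case (gen_mult a b)
    then show ?case
      using mat_zpow_add[OF R] mat_zpow_reflection_mult[OF R conj]
        mat_zpow_reflection_mult_reflection[OF R conj assms(1)]
      by (metis matrix_mul_assoc)
  next
    case (gen_inv a)
    then obtain m where "a = mat_zpow (X ** Y) m \<or> a = mat_zpow (X ** Y) m ** X"
      by blast
    moreover have "matrix_inv (mat_zpow (X ** Y) m ** X) = mat_zpow (X ** Y) m ** X"
      by (rule matrix_inv_unique) (simp add: mat_zpow_reflection_mult_reflection[OF R conj assms(1)])
    ultimately show ?case
      using matrix_inv_mat_zpow[OF R] by metis
  qed
qed

lemma gen_subgroup_two_involutions_cases: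
  fixes X Y :: "'a::field^'n^'n"
  assumes "X ** X = mat 1" "Y ** Y = mat 1" "A \<in> gen_subgroup {X, Y}"
  obtains k where "A = mat_zpow (X ** Y) k" | "A ** A = mat 1"
  using gen_subgroup_two_involutions[OF assms]
    mat_zpow_reflection_mult_reflection[OF invertible_involution_product[OF assms(1,2)]
      involution_inverts_product[OF assms(1,2)] assms(1)]
  by (metis diff_self mat_zpow_0)

lemma matrix_inv_det_one:
  fixes A :: "'a::field^2^2"
  assumes "det A = 1"
  shows "matrix_inv A = mat (trace A) - A"
  by (rule matrix_inv_unique)
    (use assms in \<open>auto simp: vec_eq_iff matrix_matrix_mult_def sum_2 forall_2 mat_def
      det_2 trace_def algebra_simps\<close>)

lemma A2_involution:
  assumes "s \<noteq> 0"
  shows "A2 t s ** A2 t s = mat 1"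
  using assms unfolding A2_def
  by (auto simp: vec_eq_iff matrix_matrix_mult_def sum_2 forall_2 mat_def field_simps power2_eq_square)

lemma det_A2:
  assumes "s \<noteq> 0"
  shows "det (A2 t s) = -1"
  using assms unfolding A2_def by (simp add: det_2 field_simps power2_eq_square)

text \<open>Only \<open>s\<^sub>1, s\<^sub>2 \<noteq> 0\<close> is needed; for \<open>s = 0\<close> the entry \<open>(1 - t\<^sup>2)/s\<close> would be the junk value 0.\<close>

theorem mainTheorem12:
  fixes t1 s1 t2 s2 :: complex
  assumes "t1 \<noteq> 0" "s1 \<noteq> 0" "t2 \<noteq> 0" "s2 \<noteq> 0"
    and "t1 \<noteq> t2" "s1 \<noteq> s2"
    and "A \<in> gen_subgroup {A2 t1 s1, A2 t2 s2}"
  shows "matrix_inv A = A \<or> (\<exists>r::complex. matrix_inv A = mat r - A)"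
  using A2_involution[OF assms(2)] A2_involution[OF assms(4)] assms(7)
proof (cases rule: gen_subgroup_two_involutions_cases)
  case (1 k)
  have "det (A2 t1 s1 ** A2 t2 s2) = 1"
    using det_A2 assms(2,4) by (simp add: det_mul)
  then have "det A = 1"
    using 1 det_mat_zpow by blast
  then show ?thesis
    using matrix_inv_det_one by blast
next
  case 2
  then show ?thesis
    using matrix_inv_unique by blast
qed

end
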